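(* Let $\mathcal{C}$ be the class of all generalized Petersen graphs $\mathrm{Pet}(n,k)$ ($2<2k\le n$) satisfying at least one of: (a) $k$ is even, $n$ is odd and $n\equiv\pm2\pmod{k-1}$; (b) $n$ and $k$ are both odd and $n\ge 5k$. Then $\mathcal{C}$ is odd-pentagonal.
   Context: For integers $n,k$ with $2<2k\le n$, the generalized Petersen graph $\mathrm{Pet}(n,k)$ has vertex set $\{u_0,\dots,u_{n-1}\}\cup\{v_0,\dots,v_{n-1}\}$ and edge set $\{u_iu_{i+1}\}\cup\{u_iv_i\}\cup\{v_iv_{i+k}\}$, indices modulo $n$. A class $\mathcal{G}$ of simple graphs is odd-girth-closed if for every positive integer $g$ there is a graph in $\mathcal{G}$ whose odd girth (length of a shortest odd cycle) is at least $g$. An odd-girth-closed class $\mathcal{G}$ is odd-pentagonal if there is a positive integer $g^*$ such that every graph in $\mathcal{G}$ with odd girth greater than $g^*$ admits a homomorphism to the 5-cycle $C_5$. *)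

theory Defs
  imports Main "HOL-Library.Extended_Nat"
begin

text \<open>A graph is a pair (V, E) of a vertex set and a symmetric, irreflexive
adjacency relation E (only edges between vertices of V matter).\<close>

type_synonym 'a graph = "'a set \<times> ('a \<Rightarrow> 'a \<Rightarrow> bool)"

definition is_cycle :: "'a set \<Rightarrow> ('a \<Rightarrow> 'a \<Rightarrow> bool) \<Rightarrow> 'a list \<Rightarrow> bool" where
  "is_cycle V E c \<longleftrightarrow> length c \<ge> 3 \<and> distinct c \<and> set c \<subseteq> V \<and>
     (\<forall>i < length c. E (c ! i) (c ! ((i + 1) mod length c)))"

text \<open>Odd girth: length of a shortest odd cycle (infinity if there is none).\<close>
definition odd_girth :: "'a set \<Rightarrow> ('a \<Rightarrow> 'a \<Rightarrow> bool) \<Rightarrow> enat" where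
  "odd_girth V E = Inf {enat (length c) | c. is_cycle V E c \<and> odd (length c)}"

definition c5_adj :: "nat \<Rightarrow> nat \<Rightarrow> bool" where
  "c5_adj i j \<longleftrightarrow> i < 5 \<and> j < 5 \<and> (j = (i + 1) mod 5 \<or> i = (j + 1) mod 5)"

definition hom_to_C5 :: "'a set \<Rightarrow> ('a \<Rightarrow> 'a \<Rightarrow> bool) \<Rightarrow> bool" where
  "hom_to_C5 V E \<longleftrightarrow> (\<exists>f. (\<forall>v\<in>V. f v < (5::nat)) \<and>
       (\<forall>u\<in>V. \<forall>v\<in>V. E u v \<longrightarrow> c5_adj (f u) (f v)))"

definition odd_girth_closed :: "'a graph set \<Rightarrow> bool" where
  "odd_girth_closed \<G> \<longleftrightarrow> (\<forall>g::nat. g > 0 \<longrightarrow>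
      (\<exists>(V, E) \<in> \<G>. odd_girth V E \<ge> enat g))"

definition odd_pentagonal :: "'a graph set \<Rightarrow> bool" where
  "odd_pentagonal \<G> \<longleftrightarrow> odd_girth_closed \<G> \<and>
     (\<exists>gs::nat. gs > 0 \<and> (\<forall>(V, E) \<in> \<G>. odd_girth V E > enat gs \<longrightarrow> hom_to_C5 V E))"

text \<open>Generalized Petersen graph Pet(n,k): vertex (False, i) is u_i, (True, i) is v_i.\<close>
definition pet_V :: "nat \<Rightarrow> (bool \<times> nat) set" where
  "pet_V n = {(b, i). i < n}"

definition pet_edge :: "nat \<Rightarrow> nat \<Rightarrow> bool \<times> nat \<Rightarrow> bool \<times> nat \<Rightarrow> bool" where
  "pet_edge n k x y \<longleftrightarrow> x \<in> pet_V n \<and> y \<in> pet_V n \<and>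
     ((\<exists>i<n. x = (False, i) \<and> y = (False, (i + 1) mod n)) \<or>
      (\<exists>i<n. x = (False, i) \<and> y = (True, i)) \<or>
      (\<exists>i<n. x = (True, i) \<and> y = (True, (i + k) mod n)))"

definition pet_E :: "nat \<Rightarrow> nat \<Rightarrow> bool \<times> nat \<Rightarrow> bool \<times> nat \<Rightarrow> bool" where
  "pet_E n k x y \<longleftrightarrow> pet_edge n k x y \<or> pet_edge n k y x"

definition Pet :: "nat \<Rightarrow> nat \<Rightarrow> (bool \<times> nat) graph" where
  "Pet n k = (pet_V n, pet_E n k)"

end

theory Submission
  imports Defs
begin

text \<open>Label the vertices of \<open>Pet(n,k)\<close> by integers so that adjacent labels differ by \<open>\<plusminus>1\<close>
modulo an odd \<open>M\<close>; this is a homomorphism to \<open>C\<^sub>M\<close>, so odd cycles have length at least \<open>M\<close>,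
and for \<open>M = 5\<close> it is a homomorphism to \<open>C\<^sub>5\<close>. The labels are roundings of \<open>A p / n\<close>
to integers of a prescribed parity, where \<open>p\<close> is the position of the vertex. For odd \<open>k\<close>
and \<open>n > M k\<close> one takes \<open>A = M\<close>; for even \<open>k\<close> with \<open>n = (k - 1) m \<plusminus> 2\<close> one takes
\<open>A = 5 m\<close>, which makes each inner edge advance the label by 4 or 6. Large odd girth rules out
the small cases (\<open>k < 18\<close>, resp. \<open>n = 5 k\<close>) that carry short odd cycles, and \<open>Pet(6g+15, 3)\<close>
maps to \<open>C\<^sub>2\<^sub>g\<^sub>+\<^sub>1\<close>, which shows that the class is odd-girth-closed.\<close>

definition adj_mod :: "int \<Rightarrow> int \<Rightarrow> int \<Rightarrow> bool" where
  "adj_mod M a b \<longleftrightarrow> M dvd (b - a - 1) \<or> M dvd (b - a + 1)"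

lemma adj_mod_sym:
  assumes "adj_mod M a b"
  shows "adj_mod M b a"
proof -
  have "a - b - 1 = - (b - a + 1)" "a - b + 1 = - (b - a - 1)" by simp_all
  then show ?thesis using assms unfolding adj_mod_def by (metis dvd_minus_iff)
qed

lemma adj_mod_cong_right:
  assumes "adj_mod M a b" "M dvd (b - b')"
  shows "adj_mod M a b'"
proof -
  have "b' - a - 1 = (b - a - 1) - (b - b')" "b' - a + 1 = (b - a + 1) - (b - b')" by simp_all
  then show ?thesis using assms unfolding adj_mod_def by (metis dvd_diff)
qed

lemma adj_mod_if_diff_pm1: "b - a = 1 \<or> b - a = -1 \<Longrightarrow> adj_mod M a b"
  unfolding adj_mod_def by auto

lemma odd_sum_pm1_iff:
  fixes s :: "nat \<Rightarrow> int"
  assumes "\<And>i. s i = 1 \<or> s i = -1"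
  shows "odd (\<Sum>i<L. s i) \<longleftrightarrow> odd L"
proof (induction L)
  case (Suc L)
  have "odd (s L)" using assms[of L] by auto
  then show ?case using Suc by auto
qed simp

text \<open>Around a closed walk the label increments sum to 0 but are \<open>\<plusminus>1\<close> modulo \<open>M\<close>; an odd
number of signs cannot sum to 0, so their sum is a nonzero multiple of \<open>M\<close> bounded by the length.\<close>

lemma odd_cycle_length_ge_modulus:
  fixes g :: "'a \<Rightarrow> int"
  assumes M: "M > 0"
    and lab: "\<And>x y. x \<in> V \<Longrightarrow> y \<in> V \<Longrightarrow> E x y \<Longrightarrow> adj_mod M (g x) (g y)"
    and cyc: "is_cycle V E c" and odd: "odd (length c)"
  shows "M \<le> int (length c)"
proof -
  define L where "L = length c"
  have L3: "L \<ge> 3" and sub: "set c \<subseteq> V"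
    and edge: "\<And>i. i < L \<Longrightarrow> E (c ! i) (c ! ((i + 1) mod L))"
    using cyc unfolding is_cycle_def L_def by auto
  define a where "a i = g (c ! i)" for i
  define d where "d i = a ((i + 1) mod L) - a i" for i
  have adj: "adj_mod M (a i) (a ((i + 1) mod L))" if "i < L" for i
  proof -
    have "(i + 1) mod L < L" using L3 by simp
    then have "c ! i \<in> V" "c ! ((i + 1) mod L) \<in> V"
      using that sub unfolding L_def by (auto dest: nth_mem)
    then show ?thesis unfolding a_def using lab edge that by blast
  qed
  define s where "s i = (if M dvd (d i - 1) then 1 else (-1::int))" for i
  have s_pm1: "s i = 1 \<or> s i = -1" for i unfolding s_def by auto
  have d_s: "M dvd (d i - s i)" if "i < L" for i
    using adj[OF that] unfolding adj_mod_def s_def d_def by auto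
  have sum_d: "(\<Sum>i<L. d i) = 0"
  proof -
    obtain L' where L': "L = Suc L'" using L3 by (cases L) auto
    have "(\<Sum>i<L'. d i) = (\<Sum>i<L'. a (Suc i) - a i)"
      by (rule sum.cong) (auto simp: d_def L')
    also have "\<dots> = a L' - a 0" by (rule sum_lessThan_telescope)
    finally show ?thesis using L' by (simp add: d_def)
  qed
  have "M dvd (\<Sum>i<L. d i - s i)" using d_s by (auto intro: dvd_sum)
  then have "M dvd (\<Sum>i<L. s i)" using sum_d by (simp add: sum_subtractf)
  then obtain q where q: "(\<Sum>i<L. s i) = M * q" by blast
  have "odd (\<Sum>i<L. s i)" using odd_sum_pm1_iff[OF s_pm1] odd L_def by simp
  then have "q \<noteq> 0" using q by auto
  have "\<bar>M * q\<bar> \<le> (\<Sum>i<L. \<bar>s i\<bar>)" unfolding q[symmetric] by (rule sum_abs)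
  also have "\<dots> = (\<Sum>i<L. 1)" using s_pm1 by (intro sum.cong refl) (metis abs_minus_cancel abs_one)
  also have "\<dots> = int L" by simp
  finally have "\<bar>M * q\<bar> \<le> int L" .
  moreover have "M \<le> \<bar>M * q\<bar>" using \<open>q \<noteq> 0\<close> M by (simp add: abs_mult)
  ultimately show ?thesis unfolding L_def by simp
qed

lemma enat_le_odd_girthI:
  assumes "\<And>c. is_cycle V E c \<Longrightarrow> odd (length c) \<Longrightarrow> m \<le> length c"
  shows "enat m \<le> odd_girth V E"
  unfolding odd_girth_def using assms by (auto intro!: Inf_greatest)

lemma odd_girth_le_length:
  assumes "is_cycle V E c" "odd (length c)"
  shows "odd_girth V E \<le> enat (length c)"
  unfolding odd_girth_def by (rule Inf_lower) (use assms in blast)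

lemma enat_le_odd_girth_if_adj_mod:
  fixes g :: "'a \<Rightarrow> int"
  assumes "M > 0" "\<And>x y. x \<in> V \<Longrightarrow> y \<in> V \<Longrightarrow> E x y \<Longrightarrow> adj_mod (int M) (g x) (g y)"
  shows "enat M \<le> odd_girth V E"
  using odd_cycle_length_ge_modulus[of "int M" V E g] assms by (auto intro!: enat_le_odd_girthI)

lemma c5_adj_if_adj_mod5:
  assumes "adj_mod 5 a b"
  shows "c5_adj (nat (a mod 5)) (nat (b mod 5))"
proof -
  have diff: "b - (a + 1) = b - a - 1" "b - (a - 1) = b - a + 1" by simp_all
  have "b mod 5 = (a + 1) mod 5 \<or> b mod 5 = (a - 1) mod 5"
    using assms unfolding adj_mod_def mod_eq_dvd_iff diff .
  then have "b mod 5 = (a mod 5 + 1) mod 5 \<or> b mod 5 = (a mod 5 - 1) mod 5"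
    by (simp add: mod_add_left_eq mod_diff_left_eq)
  moreover have "a mod 5 \<in> {0, 1, 2, 3, 4}" by auto
  ultimately show ?thesis unfolding c5_adj_def by auto
qed

lemma hom_to_C5_if_adj_mod5:
  fixes g :: "'a \<Rightarrow> int"
  assumes "\<And>x y. x \<in> V \<Longrightarrow> y \<in> V \<Longrightarrow> E x y \<Longrightarrow> adj_mod 5 (g x) (g y)"
  shows "hom_to_C5 V E"
  unfolding hom_to_C5_def
  using assms c5_adj_if_adj_mod5 by (intro exI[of _ "\<lambda>x. nat (g x mod 5)"]) auto

text \<open>For \<open>n > 0\<close> and \<open>\<sigma> \<in> {0, 1}\<close>, \<open>parity_round A n \<sigma> p\<close> is the integer of parity \<open>\<sigma>\<close>
nearest to \<open>A p / n\<close> (ties rounded up).\<close>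

definition parity_round :: "int \<Rightarrow> int \<Rightarrow> int \<Rightarrow> int \<Rightarrow> int" where
  "parity_round A n \<sigma> p = \<sigma> + 2 * ((A * p + (1 - \<sigma>) * n) div (2 * n))"

lemma zdiv_diff_0_or_1:
  fixes X Y D :: int
  assumes "D > 0" "0 \<le> Y - X" "Y - X < D"
  shows "Y div D - X div D = 0 \<or> Y div D - X div D = 1"
proof -
  have "X div D \<le> Y div D" using assms by (simp add: zdiv_mono1)
  moreover have "Y div D \<le> (X + D) div D" by (rule zdiv_mono1) (use assms in auto)
  moreover have "(X + D) div D = X div D + 1" using assms by simp
  ultimately show ?thesis by linarith
qed

lemma zdiv_diff_2_or_3:
  fixes X Y D :: int
  assumes "D > 0" "2 * D \<le> Y - X" "Y - X \<le> 3 * D"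
  shows "Y div D - X div D = 2 \<or> Y div D - X div D = 3"
proof -
  have "(X + 2 * D) div D \<le> Y div D" by (rule zdiv_mono1) (use assms in auto)
  moreover have "Y div D \<le> (X + 3 * D) div D" by (rule zdiv_mono1) (use assms in auto)
  moreover have "(X + 2 * D) div D = X div D + 2" "(X + 3 * D) div D = X div D + 3"
    using assms by simp_all
  ultimately show ?thesis by linarith
qed

lemma parity_round_diff_pm1:
  assumes n: "n > 0" and "\<sigma> \<in> {0, 1}" "\<sigma>' \<in> {0, 1}" "\<sigma> \<noteq> \<sigma>'"
    and close: "\<bar>A * (p' - p)\<bar> < n"
  shows "parity_round A n \<sigma>' p' - parity_round A n \<sigma> p = 1 \<or>
         parity_round A n \<sigma>' p' - parity_round A n \<sigma> p = -1"
proof -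
  have odd_even: "parity_round A n 0 y - parity_round A n 1 x = 1 \<or>
                  parity_round A n 0 y - parity_round A n 1 x = -1"
    if "\<bar>A * (y - x)\<bar> < n" for x y
  proof -
    have "0 \<le> (A * y + n) - A * x" "(A * y + n) - A * x < 2 * n"
      using that by (auto simp: algebra_simps abs_less_iff)
    then have "(A * y + n) div (2 * n) - (A * x) div (2 * n) = 0 \<or>
               (A * y + n) div (2 * n) - (A * x) div (2 * n) = 1"
      using zdiv_diff_0_or_1[of "2 * n"] n by auto
    then show ?thesis unfolding parity_round_def by auto
  qed
  have "\<bar>A * (p - p')\<bar> < n" using close by (simp add: abs_minus_commute right_diff_distrib)
  then show ?thesis using odd_even[OF close] odd_even[of p p'] assms(2-4) by auto
qed

lemma parity_round_diff_4_or_6: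
  assumes n: "n > 0" and "4 * n \<le> A * k" "A * k \<le> 6 * n"
  shows "parity_round A n \<sigma> (p + k) - parity_round A n \<sigma> p = 4 \<or>
         parity_round A n \<sigma> (p + k) - parity_round A n \<sigma> p = 6"
proof -
  let ?Y = "A * (p + k) + (1 - \<sigma>) * n" and ?X = "A * p + (1 - \<sigma>) * n"
  have span: "2 * (2 * n) \<le> ?Y - ?X" "?Y - ?X \<le> 3 * (2 * n)"
    using assms by (simp_all add: algebra_simps)
  have "?Y div (2 * n) - ?X div (2 * n) = 2 \<or> ?Y div (2 * n) - ?X div (2 * n) = 3"
    by (rule zdiv_diff_2_or_3[OF _ span]) (use n in simp)
  then show ?thesis unfolding parity_round_def by auto
qed

text \<open>Shifting by an odd \<open>n\<close> moves \<open>A p / n\<close> by the odd number \<open>A\<close>, which flips the parity.\<close>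

lemma parity_round_shift:
  assumes n: "n > 0" and "odd A" "\<sigma> \<in> {0, 1}"
  shows "parity_round A n (1 - \<sigma>) (p + n) = parity_round A n \<sigma> p + A"
proof -
  obtain t where t: "A = 2 * t + 1" using \<open>odd A\<close> oddE by blast
  have "A * (p + n) + \<sigma> * n = A * p + (1 - \<sigma>) * n + (t + \<sigma>) * (2 * n)"
    by (simp add: t algebra_simps)
  then have "(A * (p + n) + \<sigma> * n) div (2 * n) = (A * p + (1 - \<sigma>) * n) div (2 * n) + t + \<sigma>"
    using n by simp
  then show ?thesis using t \<open>\<sigma> \<in> {0, 1}\<close> unfolding parity_round_def by auto
qed

text \<open>The rim and inner labellings are given on all of \<open>\<int>\<close>; the wrap-around at \<open>n\<close> is
handled by periodicity modulo \<open>M\<close>.\<close>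

definition pet_lift :: "(int \<Rightarrow> int) \<Rightarrow> (int \<Rightarrow> int) \<Rightarrow> bool \<times> nat \<Rightarrow> int" where
  "pet_lift f\<^sub>u f\<^sub>v x = (if fst x then f\<^sub>v (int (snd x)) else f\<^sub>u (int (snd x)))"

lemma adj_mod_shift_mod:
  fixes f :: "int \<Rightarrow> int" and i d n :: nat
  assumes per: "\<And>p. M dvd (f (p + int n) - f p)"
    and adj: "\<And>p. adj_mod M (f p) (f (p + int d))"
    and "i < n" "d \<le> n"
  shows "adj_mod M (f (int i)) (f (int ((i + d) mod n)))"
proof (cases "i + d < n")
  case True
  then show ?thesis using adj[of "int i"] by simp
next
  case False
  then have wrap: "(i + d) mod n = i + d - n" using assms(3,4) by (simp add: le_mod_geq)
  have "int i + int d = int (i + d - n) + int n" using False by simp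
  then have "M dvd (f (int i + int d) - f (int (i + d - n)))" using per by metis
  then show ?thesis using adj_mod_cong_right[OF adj[of "int i"]] wrap by simp
qed

lemma pet_lift_adj_mod:
  assumes "k \<le> n"
    and per_u: "\<And>p. M dvd (f\<^sub>u (p + int n) - f\<^sub>u p)"
    and per_v: "\<And>p. M dvd (f\<^sub>v (p + int n) - f\<^sub>v p)"
    and adj_rim: "\<And>p. adj_mod M (f\<^sub>u p) (f\<^sub>u (p + 1))"
    and adj_spoke: "\<And>p. adj_mod M (f\<^sub>u p) (f\<^sub>v p)"
    and adj_inner: "\<And>p. adj_mod M (f\<^sub>v p) (f\<^sub>v (p + int k))"
    and "pet_E n k x y"
  shows "adj_mod M (pet_lift f\<^sub>u f\<^sub>v x) (pet_lift f\<^sub>u f\<^sub>v y)"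
proof -
  have "adj_mod M (pet_lift f\<^sub>u f\<^sub>v x) (pet_lift f\<^sub>u f\<^sub>v y)" if edge: "pet_edge n k x y" for x y
  proof -
    consider (rim) i where "i < n" "x = (False, i)" "y = (False, (i + 1) mod n)"
      | (spoke) i where "i < n" "x = (False, i)" "y = (True, i)"
      | (inner) i where "i < n" "x = (True, i)" "y = (True, (i + k) mod n)"
      using edge unfolding pet_edge_def by blast
    then show ?thesis
    proof cases
      case (rim i)
      then show ?thesis using adj_mod_shift_mod[of M f\<^sub>u n 1 i] per_u adj_rim
        by (simp add: pet_lift_def)
    next
      case (spoke i)
      then show ?thesis using adj_spoke by (simp add: pet_lift_def)
    next
      case (inner i)
      then show ?thesis using adj_mod_shift_mod[of M f\<^sub>v n k i] per_v adj_inner \<open>k \<le> n\<close>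
        by (simp add: pet_lift_def)
    qed
  qed
  then show ?thesis using \<open>pet_E n k x y\<close> adj_mod_sym unfolding pet_E_def by blast
qed

definition rim_label :: "int \<Rightarrow> int \<Rightarrow> int \<Rightarrow> int" where
  "rim_label A n p = parity_round A n (p mod 2) p"

definition inner_label :: "int \<Rightarrow> int \<Rightarrow> int \<Rightarrow> int \<Rightarrow> int" where
  "inner_label A n e p = parity_round A n ((p + 1) mod 2) (p + e)"

lemma rim_label_shift:
  assumes "n > 0" "odd n" "odd A"
  shows "rim_label A n (p + n) = rim_label A n p + A"
proof -
  have \<sigma>: "p mod 2 \<in> {0, 1}" by auto
  have "(p + n) mod 2 = 1 - p mod 2" using \<open>odd n\<close> by presburger
  then have "rim_label A n (p + n) = parity_round A n (1 - p mod 2) (p + n)"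
    unfolding rim_label_def by simp
  also have "\<dots> = rim_label A n p + A"
    unfolding rim_label_def by (rule parity_round_shift[OF assms(1,3) \<sigma>])
  finally show ?thesis .
qed

lemma inner_label_shift:
  assumes "n > 0" "odd n" "odd A"
  shows "inner_label A n e (p + n) = inner_label A n e p + A"
proof -
  have \<sigma>: "(p + 1) mod 2 \<in> {0, 1}" by auto
  have "(p + n + 1) mod 2 = 1 - (p + 1) mod 2" using \<open>odd n\<close> by presburger
  then have "inner_label A n e (p + n) = parity_round A n (1 - (p + 1) mod 2) ((p + e) + n)"
    unfolding inner_label_def by (simp add: ac_simps)
  also have "\<dots> = inner_label A n e p + A"
    unfolding inner_label_def by (rule parity_round_shift[OF assms(1,3) \<sigma>])
  finally show ?thesis .
qed

definition pet_parity_label :: "int \<Rightarrow> nat \<Rightarrow> int \<Rightarrow> bool \<times> nat \<Rightarrow> int" where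
  "pet_parity_label A n e = pet_lift (rim_label A (int n)) (inner_label A (int n) e)"

text \<open>Rim and spoke edges join labels of opposite parity rounded from nearby points, so only the
inner edges depend on \<open>k\<close>.\<close>

lemma pet_adj_mod_parity_label:
  assumes "odd n" "k \<le> n" "odd A" "\<bar>A\<bar> < int n" "\<bar>A * e\<bar> < int n" "M dvd A"
    and inner: "\<And>p. adj_mod M (inner_label A (int n) e p) (inner_label A (int n) e (p + int k))"
    and "pet_E n k x y"
  shows "adj_mod M (pet_parity_label A n e x) (pet_parity_label A n e y)"
  unfolding pet_parity_label_def
proof (rule pet_lift_adj_mod)
  show "k \<le> n" "pet_E n k x y" by fact+
  show "adj_mod M (inner_label A (int n) e p) (inner_label A (int n) e (p + int k))" for p
    by (rule inner)
  have n: "int n > 0" "odd (int n)" using \<open>odd n\<close> by (auto intro: odd_pos)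
  have flip: "p mod 2 \<in> {0, 1}" "(p + 1) mod 2 \<in> {0, 1}" "p mod 2 \<noteq> (p + 1) mod 2"
    for p :: int by (auto, presburger)
  have round_pm1: "adj_mod M (parity_round A (int n) (p mod 2) p)
                     (parity_round A (int n) ((p + 1) mod 2) p')"
    if "\<bar>A * (p' - p)\<bar> < int n" for p p'
    using parity_round_diff_pm1[OF n(1) flip[of p] that] by (rule adj_mod_if_diff_pm1)
  show "M dvd (rim_label A (int n) (p + int n) - rim_label A (int n) p)" for p
    using rim_label_shift[OF n \<open>odd A\<close>] \<open>M dvd A\<close> by simp
  show "M dvd (inner_label A (int n) e (p + int n) - inner_label A (int n) e p)" for p
    using inner_label_shift[OF n \<open>odd A\<close>] \<open>M dvd A\<close> by simp
  show "adj_mod M (rim_label A (int n) p) (rim_label A (int n) (p + 1))" for p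
    using round_pm1[where p = p and p' = "p + 1"] \<open>\<bar>A\<bar> < int n\<close>
    unfolding rim_label_def by simp
  show "adj_mod M (rim_label A (int n) p) (inner_label A (int n) e p)" for p
    using round_pm1[where p = p and p' = "p + e"] \<open>\<bar>A * e\<bar> < int n\<close>
    unfolding rim_label_def inner_label_def by simp
qed

lemma pet_adj_mod_parity_label_odd:
  assumes "odd n" "odd k" "odd M" "0 < M" "M * int k < int n" "pet_E n k x y"
  shows "adj_mod M (pet_parity_label M n 0 x) (pet_parity_label M n 0 y)"
proof (rule pet_adj_mod_parity_label)
  have "M \<le> M * int k" using \<open>odd k\<close> \<open>0 < M\<close> by (cases k) auto
  moreover have "int k \<le> M * int k" using \<open>0 < M\<close> by (simp add: mult_le_cancel_right1)
  ultimately have "M < int n" "int k < int n" using assms(5) by linarith+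
  then show "k \<le> n" "\<bar>M\<bar> < int n" using \<open>0 < M\<close> by auto
  show "\<bar>M * 0\<bar> < int n" using \<open>odd n\<close> by (auto intro: odd_pos)
  have n: "int n > 0" using \<open>odd n\<close> by (auto intro: odd_pos)
  fix p :: int
  have "(p + 1) mod 2 \<in> {0, 1}" "(p + int k + 1) mod 2 \<in> {0, 1}"
       "(p + 1) mod 2 \<noteq> (p + int k + 1) mod 2"
    using \<open>odd k\<close> by (auto, presburger)
  moreover have "\<bar>M * ((p + int k) - p)\<bar> < int n" using assms(4,5) by simp
  ultimately show "adj_mod M (inner_label M (int n) 0 p) (inner_label M (int n) 0 (p + int k))"
    unfolding inner_label_def
    using parity_round_diff_pm1[OF n] by (simp add: adj_mod_if_diff_pm1 ac_simps)
qed (use assms in auto)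

lemma pet_adj_mod5_parity_label_even:
  assumes "odd n" "even k" "k \<le> n" "odd m" "0 < m" "5 * m < int n"
    and "4 * int n \<le> 5 * m * int k" "5 * m * int k \<le> 6 * int n" "pet_E n k x y"
  shows "adj_mod 5 (pet_parity_label (5 * m) n 1 x) (pet_parity_label (5 * m) n 1 y)"
proof (rule pet_adj_mod_parity_label)
  have n: "int n > 0" using \<open>odd n\<close> by (auto intro: odd_pos)
  fix p :: int
  have "(p + int k + 1) mod 2 = (p + 1) mod 2" using \<open>even k\<close> by presburger
  then have "inner_label (5 * m) (int n) 1 (p + int k) =
             parity_round (5 * m) (int n) ((p + 1) mod 2) ((p + 1) + int k)"
    unfolding inner_label_def by (simp add: ac_simps)
  moreover have "inner_label (5 * m) (int n) 1 p =
                  parity_round (5 * m) (int n) ((p + 1) mod 2) (p + 1)"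
    unfolding inner_label_def ..
  ultimately have "inner_label (5 * m) (int n) 1 (p + int k) - inner_label (5 * m) (int n) 1 p
                     \<in> {4, 6}"
    using parity_round_diff_4_or_6[OF n] assms(7,8) by (simp add: mult.assoc)
  then show "adj_mod 5 (inner_label (5 * m) (int n) 1 p)
                       (inner_label (5 * m) (int n) 1 (p + int k))"
    unfolding adj_mod_def by auto
qed (use assms in auto)

lemma pet_rim_spoke_cycle:
  assumes k: "2 \<le> k" "k < n"
  defines "c \<equiv> map (\<lambda>j. (False, j)) [0..<Suc k] @ [(True, k), (True, 0)]"
  shows "is_cycle (pet_V n) (pet_E n k) c" "length c = k + 3"
proof -
  show len: "length c = k + 3" unfolding c_def by simp
  have c1: "c ! i = (False, i)" if "i \<le> k" for i
    unfolding c_def using that by (simp add: nth_append)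
  have c2: "c ! (Suc k) = (True, k)" "c ! (Suc (Suc k)) = (True, 0)"
    unfolding c_def by (simp_all add: nth_append)
  have dist: "distinct c" unfolding c_def using k by (auto simp: distinct_map inj_on_def)
  have sub: "set c \<subseteq> pet_V n" unfolding c_def pet_V_def using k by auto
  have ed: "pet_E n k (c ! i) (c ! ((i + 1) mod length c))" if "i < length c" for i
  proof -
    have "i < k \<or> i = k \<or> i = Suc k \<or> i = Suc (Suc k)" using that len by auto
    then show ?thesis
    proof (elim disjE)
      assume "i < k"
      then have "(i + 1) mod length c = i + 1" using len by simp
      then show ?thesis using \<open>i < k\<close> c1[of i] c1[of "i+1"] k
        unfolding pet_E_def pet_edge_def pet_V_def by auto
    next
      assume "i = k"
      then have "(i + 1) mod length c = Suc k" using len by simp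
      then show ?thesis using \<open>i = k\<close> c1[of k] c2 k
        unfolding pet_E_def pet_edge_def pet_V_def by auto
    next
      assume "i = Suc k"
      then have "(i + 1) mod length c = Suc (Suc k)" using len by simp
      then show ?thesis using \<open>i = Suc k\<close> c2 k
        unfolding pet_E_def pet_edge_def pet_V_def by auto
    next
      assume "i = Suc (Suc k)"
      then have "i + 1 = length c" using len by simp
      then have "(i + 1) mod length c = 0" by simp
      then show ?thesis using \<open>i = Suc (Suc k)\<close> c2 c1[of 0] k
        unfolding pet_E_def pet_edge_def pet_V_def by auto
    qed
  qed
  show "is_cycle (pet_V n) (pet_E n k) c"
    unfolding is_cycle_def using len dist sub ed by auto
qed

lemma pet_inner_pentagon:
  assumes k: "0 < k" and n: "n = 5 * k"
  defines "c \<equiv> map (\<lambda>j. (True, j * k)) [0..<5]"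
  shows "is_cycle (pet_V n) (pet_E n k) c" "length c = 5"
proof -
  show len: "length c = 5" unfolding c_def by simp
  have c1: "c ! i = (True, i * k)" if "i < 5" for i
    unfolding c_def using that by simp
  have dist: "distinct c" unfolding c_def using k by (auto simp: distinct_map inj_on_def)
  have sub: "set c \<subseteq> pet_V n" unfolding c_def pet_V_def using k n by auto
  have ed: "pet_E n k (c ! i) (c ! ((i + 1) mod length c))" if "i < length c" for i
  proof (cases "i < 4")
    case True
    then have m: "(i + 1) mod length c = i + 1" using len by simp
    have "i * k + k < n" using True n k by (simp add: algebra_simps)
    then have "pet_edge n k (True, i * k) (True, (i + 1) * k)"
      unfolding pet_edge_def pet_V_def using True n k
      by (auto intro!: exI[of _ "i * k"])
    then show ?thesis unfolding pet_E_def using m c1[of i] c1[of "i+1"] True by simp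
  next
    case False
    then have i4: "i = 4" using that len by simp
    then have m: "(i + 1) mod length c = 0" using len by simp
    have "pet_edge n k (True, 4 * k) (True, 0)"
      unfolding pet_edge_def pet_V_def using n k
      by (auto intro!: exI[of _ "4 * k"])
    then show ?thesis unfolding pet_E_def using m c1[of 4] c1[of 0] i4 by simp
  qed
  show "is_cycle (pet_V n) (pet_E n k) c"
    unfolding is_cycle_def using len dist sub ed by auto
qed

lemma pet_odd_girth_ge:
  fixes M :: nat
  assumes "odd n" "odd k" "odd M" "M * k < n"
  shows "enat M \<le> odd_girth (pet_V n) (pet_E n k)"
proof (rule enat_le_odd_girth_if_adj_mod)
  show "M > 0" using \<open>odd M\<close> by (auto intro: odd_pos)
  then show "adj_mod (int M) (pet_parity_label M n 0 x) (pet_parity_label M n 0 y)"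
    if "pet_E n k x y" for x y
    using pet_adj_mod_parity_label_odd[OF \<open>odd n\<close> \<open>odd k\<close> _ _ _ that] assms
    by (simp flip: of_nat_mult)
qed

lemma pet_hom_to_C5_odd:
  assumes "odd n" "odd k" "5 * k < n"
  shows "hom_to_C5 (pet_V n) (pet_E n k)"
  using pet_adj_mod_parity_label_odd[OF assms(1,2), of 5] assms(3)
  by (intro hom_to_C5_if_adj_mod5) auto

text \<open>This choice of \<open>m\<close> makes \<open>5 m k / n\<close>, the advance of the label along an inner edge,
lie in \<open>[4, 6]\<close>.\<close>

lemma inner_multiplier_bounds:
  fixes K N m d :: int
  assumes "18 \<le> K" "K \<le> N" "odd N" "N = (K - 1) * m + d" "d = 2 \<or> d = -2"
  shows "odd m" "0 < m" "5 * m < N" "4 * N \<le> 5 * m * K" "5 * m * K \<le> 6 * N"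
proof -
  show "0 < m"
  proof (rule ccontr)
    assume "\<not> 0 < m"
    then have "(K - 1) * m \<le> 0" using assms(1) by (simp add: mult_nonneg_nonpos)
    then show False using assms by linarith
  qed
  show "odd m"
  proof
    assume "even m"
    then show False using assms(3-5) by auto
  qed
  have "18 * m \<le> K * m" using assms(1) \<open>0 < m\<close> by simp
  moreover have "N = K * m - m + d" "5 * m * K = 5 * (K * m)"
    using assms(4) by (simp_all add: algebra_simps)
  ultimately show "5 * m < N" "4 * N \<le> 5 * m * K" "5 * m * K \<le> 6 * N"
    using \<open>0 < m\<close> assms(5) by linarith+
qed

lemma pet_hom_to_C5_even:
  assumes "18 \<le> k" "k \<le> n" "even k" "odd n"
    and "(int k - 1) dvd (int n - 2) \<or> (int k - 1) dvd (int n + 2)"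
  shows "hom_to_C5 (pet_V n) (pet_E n k)"
proof -
  obtain m d where "int n - d = (int k - 1) * m" "d = 2 \<or> d = -2"
    using assms(5) by (metis dvdE diff_minus_eq_add)
  then have "int n = (int k - 1) * m + d" "d = 2 \<or> d = -2" by linarith+
  moreover have "18 \<le> int k" "int k \<le> int n" "odd (int n)" using assms(1,2,4) by simp_all
  ultimately have "odd m" "0 < m" "5 * m < int n"
    "4 * int n \<le> 5 * m * int k" "5 * m * int k \<le> 6 * int n"
    using inner_multiplier_bounds by blast+
  then show ?thesis
    using pet_adj_mod5_parity_label_even[OF \<open>odd n\<close> \<open>even k\<close> \<open>k \<le> n\<close>]
    by (intro hom_to_C5_if_adj_mod5) auto
qed

text \<open>The threshold 20 excludes the short odd cycles of length \<open>k + 3\<close> (\<open>k\<close> even, \<open>k < 18\<close>)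
and 5 (\<open>n = 5 k\<close>).\<close>

lemma pet_hom_to_C5_if_odd_girth_gt_20:
  assumes "2 < 2 * k" "2 * k \<le> n"
    and "(even k \<and> odd n \<and> ((int k - 1) dvd (int n - 2) \<or> (int k - 1) dvd (int n + 2))) \<or>
         (odd n \<and> odd k \<and> n \<ge> 5 * k)"
    and girth: "enat 20 < odd_girth (pet_V n) (pet_E n k)"
  shows "hom_to_C5 (pet_V n) (pet_E n k)"
  using assms(3)
proof
  assume "even k \<and> odd n \<and> ((int k - 1) dvd (int n - 2) \<or> (int k - 1) dvd (int n + 2))"
  then have "even k" "odd n" and dvd: "(int k - 1) dvd (int n - 2) \<or> (int k - 1) dvd (int n + 2)"
    by simp_all
  have k: "2 \<le> k" "k < n" using assms(1,2) by auto
  have "odd (k + 3)" using \<open>even k\<close> by simp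
  then have "odd_girth (pet_V n) (pet_E n k) \<le> enat (k + 3)"
    using odd_girth_le_length[OF pet_rim_spoke_cycle(1)[OF k]]
    unfolding pet_rim_spoke_cycle(2)[OF k] by blast
  with girth have "enat 20 < enat (k + 3)" by (rule less_le_trans)
  then have "18 \<le> k" by simp
  then show ?thesis using pet_hom_to_C5_even dvd assms(2) \<open>even k\<close> \<open>odd n\<close> by simp
next
  assume "odd n \<and> odd k \<and> 5 * k \<le> n"
  moreover have "n \<noteq> 5 * k"
  proof
    assume n: "n = 5 * k"
    have k: "0 < k" using assms(1) by simp
    have "odd_girth (pet_V n) (pet_E n k) \<le> enat 5"
      using odd_girth_le_length[OF pet_inner_pentagon(1)[OF k n]]
      unfolding pet_inner_pentagon(2)[OF k n] by simp
    with girth have "enat 20 < enat 5" by (rule less_le_trans)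
    then show False by simp
  qed
  ultimately show ?thesis using pet_hom_to_C5_odd by simp
qed

theorem corollary7:
  shows "odd_pentagonal
    {Pet n k | n k. 2 < 2 * k \<and> 2 * k \<le> n \<and>
       ((even k \<and> odd n \<and>
          ((int k - 1) dvd (int n - 2) \<or> (int k - 1) dvd (int n + 2))) \<or>
        (odd n \<and> odd k \<and> n \<ge> 5 * k))}"
    (is "odd_pentagonal ?C")
  unfolding odd_pentagonal_def odd_girth_closed_def
proof (intro conjI allI impI exI[of _ 20])
  fix g :: nat
  have "enat g \<le> enat (2 * g + 1)" by simp
  also have "\<dots> \<le> odd_girth (pet_V (6 * g + 15)) (pet_E (6 * g + 15) 3)"
    by (rule pet_odd_girth_ge) auto
  finally have "enat g \<le> odd_girth (pet_V (6 * g + 15)) (pet_E (6 * g + 15) 3)" .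
  moreover have "Pet (6 * g + 15) 3 \<in> ?C"
    by (intro CollectI exI[of _ "6 * g + 15"] exI[of _ 3]) simp
  ultimately show "\<exists>(V, E) \<in> ?C. enat g \<le> odd_girth V E"
    by (intro bexI[of _ "Pet (6 * g + 15) 3"]) (simp_all add: Pet_def)
next
  show "\<forall>(V, E) \<in> ?C. enat 20 < odd_girth V E \<longrightarrow> hom_to_C5 V E"
  proof
    fix G assume "G \<in> ?C"
    then obtain n k where "G = Pet n k" and "2 < 2 * k" "2 * k \<le> n"
      "(even k \<and> odd n \<and> ((int k - 1) dvd (int n - 2) \<or> (int k - 1) dvd (int n + 2))) \<or>
        (odd n \<and> odd k \<and> n \<ge> 5 * k)" by blast
    then show "case G of (V, E) \<Rightarrow> enat 20 < odd_girth V E \<longrightarrow> hom_to_C5 V E"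
      using pet_hom_to_C5_if_odd_girth_gt_20 by (simp add: Pet_def)
  qed
qed simp

end
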